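(* Let $\mathcal{M}$ be a relational structure with domain $M$ and $\mathcal{L}$ a logic. For every $\mathcal{M}$-$\mathcal{L}$-MSO sentence $\psi$ (over $\omega$-words over $M^n$) there exists an $\mathcal{M}$-$\mathcal{L}$-Büchi automaton $\mathcal{B}$ with $L(\psi)=L(\mathcal{B})$.
   Context: $\mathcal{L}$ is a logic over the signature of $\mathcal{M}$ (e.g. FO, MSO) closed under Boolean connectives and first-order existential quantification; $\Phi_n$ is the set of $\mathcal{L}$-formulas with $n$ free variables, and $\phi^{\mathcal{M}}=\{\bar m\in M^n\mid\mathcal{M}\models\phi[\bar m]\}$. $\mathcal{M}$-$\mathcal{L}$-MSO: given a finite set $\Phi\subseteq\Phi_n$, an $\omega$-word $\alpha=\langle\alpha_1,\ldots,\alpha_n\rangle$ over $M^n$ (whose $i$-th letter is $(\alpha_1(i),\ldots,\alpha_n(i))$) is identified with the structure $(\mathbb{N},0,<,S,(P_\phi)_{\phi\in\Phi})$ with the usual $0,<$, successor $S$, and $P_\phi=\{i\mid\alpha(i)\in\phi^{\mathcal{M}}\}$; $\mathcal{M}$-$\mathcal{L}$-MSO sentences are monadic second-order sentences over such structures (first-order variables over $\mathbb{N}$, second-order quantification over sets of positions / letter sequences), and $L(\psi)$ is the set of $\omega$-words over $M^n$ whose associated structure satisfies $\psi$. An $\mathcal{M}$-$\mathcal{L}$-Büchi automaton over $M^n$ is $\mathcal{B}=(Q,M^n,q_0,\Delta,F)$ with finite state set $Q$, initial state $q_0$, $F\subseteq Q$, finite $\Delta\subseteq Q\times\Phi_n\times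 Q$; a run on $\alpha$ is a state sequence starting at $q_0$ where each step $\rho(i)\to\rho(i+1)$ uses some $(\rho(i),\phi,\rho(i+1))\in\Delta$ with $\mathcal{M}\models\phi[\alpha(i)]$; $L(\mathcal{B})$ is the set of $\omega$-words having a run visiting $F$ infinitely often. *)

theory Defs
  imports Main
begin

text \<open>
  Formulas have type 'f; Phi n is the set of formulas with n free variables
  (Phi_n); sat phi ms means M |= phi[ms] for a tuple ms (a list of length n).
\<close>

definition tuples :: "nat \<Rightarrow> 'm list set" where
  "tuples n = {ms. length ms = n}"

definition logic_closed :: "(nat \<Rightarrow> 'f set) \<Rightarrow> ('f \<Rightarrow> 'm list \<Rightarrow> bool) \<Rightarrow> bool" where
  "logic_closed Phi sat \<longleftrightarrow>
     (\<forall>n. Phi n \<noteq> {}) \<and>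
     (\<forall>n. \<forall>\<phi>\<in>Phi n. \<exists>\<chi>\<in>Phi n. \<forall>ms\<in>tuples n. sat \<chi> ms \<longleftrightarrow> \<not> sat \<phi> ms) \<and>
     (\<forall>n. \<forall>\<phi>\<in>Phi n. \<forall>\<psi>\<in>Phi n. \<exists>\<chi>\<in>Phi n. \<forall>ms\<in>tuples n. sat \<chi> ms \<longleftrightarrow> sat \<phi> ms \<and> sat \<psi> ms) \<and>
     (\<forall>n. \<forall>\<phi>\<in>Phi n. \<forall>\<psi>\<in>Phi n. \<exists>\<chi>\<in>Phi n. \<forall>ms\<in>tuples n. sat \<chi> ms \<longleftrightarrow> sat \<phi> ms \<or> sat \<psi> ms) \<and>
     (\<forall>n. \<forall>\<phi>\<in>Phi (Suc n). \<exists>\<chi>\<in>Phi n. \<forall>ms\<in>tuples n. sat \<chi> ms \<longleftrightarrow> (\<exists>m. sat \<phi> (ms @ [m])))"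

definition words :: "nat \<Rightarrow> (nat \<Rightarrow> 'm list) set" where
  "words n = {\<alpha>. \<forall>i. length (\<alpha> i) = n}"

text \<open>MSO formulas over (N,0,<,S,(P_phi)_phi); first-order variables and
  second-order (set) variables are named by naturals, in separate name spaces.\<close>
datatype 'f mso =
    Zero nat
  | Eq nat nat
  | Less nat nat
  | Succ nat nat
  | Pred 'f nat
  | Mem nat nat
  | Neg "'f mso"
  | Conj "'f mso" "'f mso"
  | Disj "'f mso" "'f mso"
  | Ex1 nat "'f mso"
  | All1 nat "'f mso"
  | Ex2 nat "'f mso"
  | All2 nat "'f mso"

primrec fv1 :: "'f mso \<Rightarrow> nat set" where
  "fv1 (Zero x) = {x}"
| "fv1 (Eq x y) = {x, y}"
| "fv1 (Less x y) = {x, y}"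
| "fv1 (Succ x y) = {x, y}"
| "fv1 (Pred \<phi> x) = {x}"
| "fv1 (Mem x X) = {x}"
| "fv1 (Neg a) = fv1 a"
| "fv1 (Conj a b) = fv1 a \<union> fv1 b"
| "fv1 (Disj a b) = fv1 a \<union> fv1 b"
| "fv1 (Ex1 x a) = fv1 a - {x}"
| "fv1 (All1 x a) = fv1 a - {x}"
| "fv1 (Ex2 X a) = fv1 a"
| "fv1 (All2 X a) = fv1 a"

primrec fv2 :: "'f mso \<Rightarrow> nat set" where
  "fv2 (Zero x) = {}"
| "fv2 (Eq x y) = {}"
| "fv2 (Less x y) = {}"
| "fv2 (Succ x y) = {}"
| "fv2 (Pred \<phi> x) = {}"
| "fv2 (Mem x X) = {X}"
| "fv2 (Neg a) = fv2 a"
| "fv2 (Conj a b) = fv2 a \<union> fv2 b"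
| "fv2 (Disj a b) = fv2 a \<union> fv2 b"
| "fv2 (Ex1 x a) = fv2 a"
| "fv2 (All1 x a) = fv2 a"
| "fv2 (Ex2 X a) = fv2 a - {X}"
| "fv2 (All2 X a) = fv2 a - {X}"

primrec preds :: "'f mso \<Rightarrow> 'f set" where
  "preds (Zero x) = {}"
| "preds (Eq x y) = {}"
| "preds (Less x y) = {}"
| "preds (Succ x y) = {}"
| "preds (Pred \<phi> x) = {\<phi>}"
| "preds (Mem x X) = {}"
| "preds (Neg a) = preds a"
| "preds (Conj a b) = preds a \<union> preds b"
| "preds (Disj a b) = preds a \<union> preds b"
| "preds (Ex1 x a) = preds a"
| "preds (All1 x a) = preds a"
| "preds (Ex2 X a) = preds a"
| "preds (All2 X a) = preds a"

definition mso_sentence :: "'f mso \<Rightarrow> bool" where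
  "mso_sentence \<psi> \<longleftrightarrow> fv1 \<psi> = {} \<and> fv2 \<psi> = {}"

text \<open>Satisfaction in the structure associated with alpha: P_phi = {i. M |= phi[alpha i]}.\<close>
primrec mso_sat :: "('f \<Rightarrow> 'm list \<Rightarrow> bool) \<Rightarrow> (nat \<Rightarrow> 'm list) \<Rightarrow>
    (nat \<Rightarrow> nat) \<Rightarrow> (nat \<Rightarrow> nat set) \<Rightarrow> 'f mso \<Rightarrow> bool" where
  "mso_sat sat \<alpha> I1 I2 (Zero x) = (I1 x = 0)"
| "mso_sat sat \<alpha> I1 I2 (Eq x y) = (I1 x = I1 y)"
| "mso_sat sat \<alpha> I1 I2 (Less x y) = (I1 x < I1 y)"
| "mso_sat sat \<alpha> I1 I2 (Succ x y) = (Suc (I1 x) = I1 y)"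
| "mso_sat sat \<alpha> I1 I2 (Pred \<phi> x) = sat \<phi> (\<alpha> (I1 x))"
| "mso_sat sat \<alpha> I1 I2 (Mem x X) = (I1 x \<in> I2 X)"
| "mso_sat sat \<alpha> I1 I2 (Neg a) = (\<not> mso_sat sat \<alpha> I1 I2 a)"
| "mso_sat sat \<alpha> I1 I2 (Conj a b) = (mso_sat sat \<alpha> I1 I2 a \<and> mso_sat sat \<alpha> I1 I2 b)"
| "mso_sat sat \<alpha> I1 I2 (Disj a b) = (mso_sat sat \<alpha> I1 I2 a \<or> mso_sat sat \<alpha> I1 I2 b)"
| "mso_sat sat \<alpha> I1 I2 (Ex1 x a) = (\<exists>i. mso_sat sat \<alpha> (I1(x := i)) I2 a)"
| "mso_sat sat \<alpha> I1 I2 (All1 x a) = (\<forall>i. mso_sat sat \<alpha> (I1(x := i)) I2 a)"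
| "mso_sat sat \<alpha> I1 I2 (Ex2 X a) = (\<exists>S. mso_sat sat \<alpha> I1 (I2(X := S)) a)"
| "mso_sat sat \<alpha> I1 I2 (All2 X a) = (\<forall>S. mso_sat sat \<alpha> I1 (I2(X := S)) a)"

text \<open>L(psi): omega-words over M^n whose structure satisfies the sentence psi
  (the assignments are irrelevant for sentences; we fix trivial ones).\<close>
definition mso_lang :: "('f \<Rightarrow> 'm list \<Rightarrow> bool) \<Rightarrow> nat \<Rightarrow> 'f mso \<Rightarrow> (nat \<Rightarrow> 'm list) set" where
  "mso_lang sat n \<psi> = {\<alpha> \<in> words n. mso_sat sat \<alpha> (\<lambda>_. 0) (\<lambda>_. {}) \<psi>}"

record ('f) buechi =
  states :: "nat set"
  init :: nat
  trans :: "(nat \<times> 'f \<times> nat) set"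
  final :: "nat set"

definition wf_buechi :: "(nat \<Rightarrow> 'f set) \<Rightarrow> nat \<Rightarrow> 'f buechi \<Rightarrow> bool" where
  "wf_buechi Phi n B \<longleftrightarrow> finite (states B) \<and> init B \<in> states B \<and> final B \<subseteq> states B \<and>
     finite (trans B) \<and> trans B \<subseteq> states B \<times> Phi n \<times> states B"

definition is_run :: "('f \<Rightarrow> 'm list \<Rightarrow> bool) \<Rightarrow> 'f buechi \<Rightarrow> (nat \<Rightarrow> 'm list) \<Rightarrow> (nat \<Rightarrow> nat) \<Rightarrow> bool" where
  "is_run sat B \<alpha> \<rho> \<longleftrightarrow> \<rho> 0 = init B \<and>
     (\<forall>i. \<exists>\<phi>. (\<rho> i, \<phi>, \<rho> (Suc i)) \<in> trans B \<and> sat \<phi> (\<alpha> i))"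

definition buechi_lang :: "('f \<Rightarrow> 'm list \<Rightarrow> bool) \<Rightarrow> nat \<Rightarrow> 'f buechi \<Rightarrow> (nat \<Rightarrow> 'm list) set" where
  "buechi_lang sat n B = {\<alpha> \<in> words n. \<exists>\<rho>. is_run sat B \<alpha> \<rho> \<and> (\<exists>\<^sub>\<infinity>i. \<rho> i \<in> final B)}"

end

theory Submission
  imports Defs "HOL-Library.Ramsey" "HOL-Library.Omega_Words_Fun"
begin

text \<open>
  Call an \<open>\<omega>\<close>-language recognizable if a map \<open>k\<close> with finitely many values on finite words,
  compatible with concatenation, saturates it: membership of a word depends only on the
  \<open>k\<close>-classes of the blocks of any factorization.  Recognizable languages are closed under
  Boolean operations (trivially) and under letter-to-letter projection (take as new class the
  set of classes of all preimages), and the atomic formulas define languages of finite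
  automata.  Coding the free variables of a formula into the letters, every formula therefore
  defines a recognizable language.  Conversely, by Ramsey's theorem every word factors as
  \<open>u v\<^sub>1 v\<^sub>2 \<dots>\<close> with all \<open>v\<^sub>j\<close> in one class \<open>e\<close>, so a recognizable language is the union of the
  sets \<open>[u][e]\<^sup>\<omega>\<close> it meets, and a Buechi automaton can guess such a factorization.  Finally a
  letter of \<open>M\<^sup>n\<close> is abstracted to the set of predicates \<open>P\<^sub>\<phi>\<close> of \<open>\<psi>\<close> it satisfies; each such
  set is defined by a Boolean combination of the \<open>\<phi>\<close>, which labels the transitions.
\<close>

subsection \<open>Factorizations of infinite words\<close>

lemma idx_sequence_strict_mono: "idx_sequence c \<Longrightarrow> strict_mono c"
  unfolding idx_sequence_def by (simp add: strict_mono_Suc_iff)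

lemma idx_sequence_ge: "idx_sequence c \<Longrightarrow> j \<le> c j"
  by (simp add: idx_sequence_strict_mono strict_mono_imp_increasing)

lemma idx_sequence_enumerate:
  assumes "infinite Y" "0 \<notin> Y"
  shows "idx_sequence (\<lambda>j. case j of 0 \<Rightarrow> 0 | Suc j' \<Rightarrow> enumerate Y j')" (is "idx_sequence ?c")
  unfolding idx_sequence_def
proof (intro conjI allI)
  fix j :: nat
  have "enumerate Y 0 \<noteq> 0"
    using assms(2) enumerate_in_set[OF assms(1), of 0] by metis
  then show "?c j < ?c (Suc j)"
    using enumerate_step[OF assms(1)] by (cases j) (simp_all only: nat.case gr0I)
qed simp

lemma enumerate_gap:
  fixes Y :: "nat set"
  assumes "infinite Y" "enumerate Y j < m" "m < enumerate Y (Suc j)"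
  shows "m \<notin> Y"
proof
  assume "m \<in> Y"
  then obtain t where t: "m = enumerate Y t"
    using assms(1) range_enumerate by blast
  have "j < t" "t < Suc j"
    using assms(2,3) unfolding t enumerate_mono_iff[OF assms(1)] .
  then show False
    by simp
qed

lemma subsequence_split:
  "i \<le> j \<Longrightarrow> j \<le> l \<Longrightarrow> subsequence w i l = subsequence w i j @ subsequence w j l"
  unfolding subsequence_def by (metis le_add_diff_inverse map_append upt_add_eq_append)

subsection \<open>Recognizable languages\<close>

definition append_congruence :: "('a list \<Rightarrow> 'c) \<Rightarrow> bool" where
  "append_congruence k \<longleftrightarrow> (\<forall>u v y. k u = k v \<longrightarrow> k (u @ y) = k (v @ y) \<and> k (y @ u) = k (y @ v))"

definition saturates :: "('a list \<Rightarrow> 'c) \<Rightarrow> (nat \<Rightarrow> 'a) set \<Rightarrow> bool" where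
  "saturates k L \<longleftrightarrow> (\<forall>w w' c c'. idx_sequence c \<longrightarrow> idx_sequence c' \<longrightarrow>
     (\<forall>j. k (subsequence w (c j) (c (Suc j))) = k (subsequence w' (c' j) (c' (Suc j)))) \<longrightarrow>
     (w \<in> L \<longleftrightarrow> w' \<in> L))"

lemma saturatesD:
  assumes "saturates k L" "idx_sequence c" "idx_sequence c'"
    and "\<And>j. k (subsequence w (c j) (c (Suc j))) = k (subsequence w' (c' j) (c' (Suc j)))"
  shows "w \<in> L \<longleftrightarrow> w' \<in> L"
  using assms unfolding saturates_def by blast

text \<open>The classes are represented as sets of finite words only to fix the type of the
  quantified map; \<open>recognizableI\<close> accepts any codomain.\<close>

definition recognizable :: "(nat \<Rightarrow> 'a) set \<Rightarrow> bool" where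
  "recognizable L \<longleftrightarrow>
     (\<exists>k :: 'a list \<Rightarrow> 'a list set. finite (range k) \<and> append_congruence k \<and> saturates k L)"

lemma recognizableI:
  fixes k :: "'a list \<Rightarrow> 'c"
  assumes "finite (range k)" "append_congruence k" "saturates k L"
  shows "recognizable L"
proof -
  define k' where "k' u = {v. k v = k u}" for u
  have k'_eq: "k' u = k' v \<longleftrightarrow> k u = k v" for u v
    unfolding k'_def by (metis (mono_tags) mem_Collect_eq)
  have "range k' = (\<lambda>c. {v. k v = c}) ` range k"
    unfolding k'_def by auto
  then have "finite (range k')"
    using assms(1) by simp
  moreover have "append_congruence k'"
    using assms(2) unfolding append_congruence_def k'_eq .
  moreover have "saturates k' L"
    using assms(3) unfolding saturates_def k'_eq .
  ultimately show ?thesis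
    unfolding recognizable_def by blast
qed

lemma saturates_Compl: "saturates k L \<Longrightarrow> saturates k (- L)"
  unfolding saturates_def by simp

lemma recognizable_Compl: "recognizable L \<Longrightarrow> recognizable (- L)"
  unfolding recognizable_def using saturates_Compl by blast

lemma recognizable_Int:
  assumes "recognizable L1" "recognizable L2"
  shows "recognizable (L1 \<inter> L2)"
proof -
  obtain k1 :: "'a list \<Rightarrow> 'a list set"
    where k1: "finite (range k1)" "append_congruence k1" "saturates k1 L1"
    using assms(1) unfolding recognizable_def by blast
  obtain k2 :: "'a list \<Rightarrow> 'a list set"
    where k2: "finite (range k2)" "append_congruence k2" "saturates k2 L2"
    using assms(2) unfolding recognizable_def by blast
  let ?k = "\<lambda>u. (k1 u, k2 u)"
  have "range ?k \<subseteq> range k1 \<times> range k2"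
    by auto
  then have "finite (range ?k)"
    using k1(1) k2(1) by (meson finite_SigmaI finite_subset)
  moreover have "append_congruence ?k"
    using k1(2) k2(2) unfolding append_congruence_def prod.inject by blast
  moreover have "saturates ?k (L1 \<inter> L2)"
    using k1(3) k2(3) unfolding saturates_def prod.inject all_conj_distrib by blast
  ultimately show ?thesis
    by (rule recognizableI)
qed

lemma recognizable_Un: "recognizable L1 \<Longrightarrow> recognizable L2 \<Longrightarrow> recognizable (L1 \<union> L2)"
  using recognizable_Compl recognizable_Int[of "- L1" "- L2"] by (metis compl_sup double_compl)

lemma recognizable_UNIV: "recognizable UNIV"
proof (rule recognizableI)
  show "finite (range (\<lambda>_ :: 'a list. ()))" "append_congruence (\<lambda>_ :: 'a list. ())"
    by (simp_all add: append_congruence_def)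
  show "saturates (\<lambda>_. ()) UNIV"
    by (simp add: saturates_def)
qed

lemma recognizable_INT:
  "finite V \<Longrightarrow> (\<And>x. x \<in> V \<Longrightarrow> recognizable (S x)) \<Longrightarrow> recognizable (\<Inter>x\<in>V. S x)"
  by (induction V rule: finite_induct) (simp_all add: recognizable_UNIV recognizable_Int)

lemma recognizable_vimage_letters:
  assumes "recognizable L"
  shows "recognizable {w. h \<circ> w \<in> L}"
proof -
  obtain k :: "'a list \<Rightarrow> 'a list set"
    where k: "finite (range k)" "append_congruence k" "saturates k L"
    using assms unfolding recognizable_def by blast
  have "range (k \<circ> map h) \<subseteq> range k"
    by auto
  then have "finite (range (k \<circ> map h))"
    using k(1) by (rule finite_subset)
  moreover have "append_congruence (k \<circ> map h)"
    using k(2) unfolding append_congruence_def o_apply map_append by blast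
  moreover have "saturates (k \<circ> map h) {w. h \<circ> w \<in> L}"
    unfolding saturates_def
  proof (intro allI impI)
    fix w w' c c'
    assume "idx_sequence c" "idx_sequence c'"
      and "\<forall>j. (k \<circ> map h) (subsequence w (c j) (c (Suc j))) =
        (k \<circ> map h) (subsequence w' (c' j) (c' (Suc j)))"
    moreover have "map h (subsequence v i j) = subsequence (h \<circ> v) i j" for v i j
      by (simp add: subsequence_def)
    ultimately show "w \<in> {w. h \<circ> w \<in> L} \<longleftrightarrow> w' \<in> {w. h \<circ> w \<in> L}"
      using saturatesD[OF k(3), of c c' "h \<circ> w" "h \<circ> w'"] by simp
  qed
  ultimately show ?thesis
    by (rule recognizableI)
qed

subsection \<open>Languages of deterministic reachability automata\<close>

definition reach_lang :: "('s \<Rightarrow> 'a \<Rightarrow> 's) \<Rightarrow> 's \<Rightarrow> ('s \<Rightarrow> bool) \<Rightarrow> (nat \<Rightarrow> 'a) set" where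
  "reach_lang \<delta> q0 F = {w. \<exists>n. F (foldl \<delta> q0 (prefix n w))}"

lemma foldl_absorbing: "(\<And>q a. F q \<Longrightarrow> F (\<delta> q a)) \<Longrightarrow> F q \<Longrightarrow> F (foldl \<delta> q xs)"
  by (induction xs arbitrary: q) auto

text \<open>The class of a finite word is its state transformer.  Because \<open>F\<close> is absorbing,
  a word is accepted iff \<open>F\<close> holds after some block boundary of any factorization.\<close>

lemma recognizable_reach_lang:
  fixes \<delta> :: "'s::finite \<Rightarrow> 'a \<Rightarrow> 's"
  assumes absorbing: "\<And>q a. F q \<Longrightarrow> F (\<delta> q a)"
  shows "recognizable (reach_lang \<delta> q0 F)"
proof (rule recognizableI)
  let ?k = "\<lambda>u q. foldl \<delta> q u"
  show "finite (range ?k)"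
    by simp
  show "append_congruence ?k"
    unfolding append_congruence_def by (simp add: fun_eq_iff)
  define K where "K w c j = foldl \<delta> q0 (prefix (c j) w)"
    for w :: "nat \<Rightarrow> 'a" and c :: "nat \<Rightarrow> nat" and j
  have K_Suc: "K w c (Suc j) = foldl \<delta> (K w c j) (subsequence w (c j) (c (Suc j)))"
    if "idx_sequence c" for w c j
    using subsequence_split[of 0 "c j" "c (Suc j)" w] that
    unfolding K_def idx_sequence_def by (simp add: less_imp_le)
  have mem_iff: "w \<in> reach_lang \<delta> q0 F \<longleftrightarrow> (\<exists>j. F (K w c j))" if c: "idx_sequence c" for w c
  proof
    assume "w \<in> reach_lang \<delta> q0 F"
    then obtain n where "F (foldl \<delta> q0 (prefix n w))"
      unfolding reach_lang_def by auto
    moreover have "prefix (c n) w = prefix n w @ subsequence w n (c n)"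
      using subsequence_split[of 0 n "c n" w] idx_sequence_ge[OF c, of n] by simp
    ultimately have "F (K w c n)"
      unfolding K_def using foldl_absorbing[of F \<delta>, OF absorbing] by simp
    then show "\<exists>j. F (K w c j)" ..
  qed (auto simp: reach_lang_def K_def)
  show "saturates ?k (reach_lang \<delta> q0 F)"
    unfolding saturates_def
  proof (intro allI impI)
    fix w w' c c'
    assume c: "idx_sequence c" and c': "idx_sequence c'"
      and same: "\<forall>j. ?k (subsequence w (c j) (c (Suc j))) = ?k (subsequence w' (c' j) (c' (Suc j)))"
    have "K w c j = K w' c' j" for j
    proof (induction j)
      case 0
      then show ?case
        using c c' by (simp add: K_def idx_sequence_def)
    next
      case (Suc j)
      then show ?case
        using K_Suc[OF c] K_Suc[OF c'] fun_cong[OF spec[OF same, of j], of "K w c j"] by simp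
    qed
    then show "w \<in> reach_lang \<delta> q0 F \<longleftrightarrow> w' \<in> reach_lang \<delta> q0 F"
      using mem_iff[OF c] mem_iff[OF c'] by simp
  qed
qed

lemma recognizable_ex_letter: "recognizable {w. \<exists>i. Q (w i)}"
proof -
  let ?\<delta> = "\<lambda>q a. q \<or> Q a"
  have "foldl ?\<delta> False (prefix n w) \<longleftrightarrow> (\<exists>i<n. Q (w i))" for w n
    by (induction n) (auto simp: less_Suc_eq)
  then have "reach_lang ?\<delta> False id = {w. \<exists>i. Q (w i)}"
    unfolding reach_lang_def by auto
  moreover have "recognizable (reach_lang ?\<delta> False id)"
    by (rule recognizable_reach_lang) simp
  ultimately show ?thesis
    by simp
qed

lemma recognizable_first_letter: "recognizable {w. Q (w 0)}"
proof -
  let ?\<delta> = "\<lambda>(started, acc) a. (True, acc \<or> (\<not> started \<and> Q a))"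
  have "foldl ?\<delta> (False, False) (prefix n w) = (0 < n, 0 < n \<and> Q (w 0))" for w n
  proof (induction n)
    case (Suc n)
    then show ?case
      by (cases n) auto
  qed simp
  then have "reach_lang ?\<delta> (False, False) snd = {w. Q (w 0)}"
    unfolding reach_lang_def by auto
  moreover have "recognizable (reach_lang ?\<delta> (False, False) snd)"
    by (rule recognizable_reach_lang) auto
  ultimately show ?thesis
    by simp
qed

lemma recognizable_ex_less: "recognizable {w. \<exists>i j. i < j \<and> Q1 (w i) \<and> Q2 (w j)}"
proof -
  let ?\<delta> = "\<lambda>(seen, acc) a. (seen \<or> Q1 a, acc \<or> (seen \<and> Q2 a))"
  have "foldl ?\<delta> (False, False) (prefix n w) =
      ((\<exists>i<n. Q1 (w i)), (\<exists>i j. i < j \<and> j < n \<and> Q1 (w i) \<and> Q2 (w j)))" for w n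
    by (induction n) (auto simp: less_Suc_eq)
  then have "reach_lang ?\<delta> (False, False) snd = {w. \<exists>i j. i < j \<and> Q1 (w i) \<and> Q2 (w j)}"
    unfolding reach_lang_def by auto
  moreover have "recognizable (reach_lang ?\<delta> (False, False) snd)"
    by (rule recognizable_reach_lang) auto
  ultimately show ?thesis
    by simp
qed

lemma recognizable_ex_succ: "recognizable {w. \<exists>i. Q1 (w i) \<and> Q2 (w (Suc i))}"
proof -
  let ?\<delta> = "\<lambda>(last, acc) a. (Q1 a, acc \<or> (last \<and> Q2 a))"
  have "foldl ?\<delta> (False, False) (prefix n w) =
      ((\<exists>m. n = Suc m \<and> Q1 (w m)), (\<exists>i. Suc i < n \<and> Q1 (w i) \<and> Q2 (w (Suc i))))" for w n
    by (induction n) (auto simp: less_Suc_eq)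
  then have "reach_lang ?\<delta> (False, False) snd = {w. \<exists>i. Q1 (w i) \<and> Q2 (w (Suc i))}"
    unfolding reach_lang_def by auto
  moreover have "recognizable (reach_lang ?\<delta> (False, False) snd)"
    by (rule recognizable_reach_lang) auto
  ultimately show ?thesis
    by simp
qed

lemma recognizable_unique_letter: "recognizable {w. \<exists>!i. Q (w i)}"
proof -
  have unique_iff:
    "(\<exists>!i. Q (w i)) \<longleftrightarrow> (\<exists>i. Q (w i)) \<and> \<not> (\<exists>i j. i < j \<and> Q (w i) \<and> Q (w j))"
    for w :: "nat \<Rightarrow> 'a"
    by (auto, metis linorder_neqE_nat)
  have unique_eq: "{w :: nat \<Rightarrow> 'a. \<exists>!i. Q (w i)} =
      {w. \<exists>i. Q (w i)} \<inter> - {w. \<exists>i j. i < j \<and> Q (w i) \<and> Q (w j)}"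
    by (intro set_eqI) (simp only: Int_iff Compl_iff mem_Collect_eq unique_iff)
  show ?thesis
    unfolding unique_eq
    by (intro recognizable_Int recognizable_Compl recognizable_ex_letter recognizable_ex_less)
qed

subsection \<open>Projection\<close>

definition proj :: "('a \<Rightarrow> 'a \<Rightarrow> bool) \<Rightarrow> (nat \<Rightarrow> 'a) set \<Rightarrow> (nat \<Rightarrow> 'a) set" where
  "proj R L = {w. \<exists>w'. (\<forall>i. R (w i) (w' i)) \<and> w' \<in> L}"

lemma list_all2_subsequence:
  "(\<forall>i. R (w i) (w' i)) \<Longrightarrow> list_all2 R (subsequence w i j) (subsequence w' i j)"
  by (simp add: list_all2_conv_all_nth)

text \<open>A witness for \<open>v\<close> is glued together block by block from words whose classes
  match those of the blocks of the witness for \<open>w\<close>.\<close>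

lemma proj_saturated:
  fixes k :: "'a list \<Rightarrow> 'c"
  assumes sat: "saturates k L" and c: "idx_sequence c" and d: "idx_sequence d"
    and same: "\<And>j. k ` {u. list_all2 R (subsequence w (c j) (c (Suc j))) u} =
                    k ` {u. list_all2 R (subsequence v (d j) (d (Suc j))) u}"
    and w: "w \<in> proj R L"
  shows "v \<in> proj R L"
proof -
  obtain w' where w': "\<forall>i. R (w i) (w' i)" "w' \<in> L"
    using w unfolding proj_def by blast
  have "k (subsequence w' (c j) (c (Suc j))) \<in> k ` {u. list_all2 R (subsequence v (d j) (d (Suc j))) u}" for j
    using same[of j] list_all2_subsequence[of R w w', OF w'(1)] by blast
  then have "\<exists>b. list_all2 R (subsequence v (d j) (d (Suc j))) b \<and>
      k (subsequence w' (c j) (c (Suc j))) = k b" for j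
    by (auto simp: image_iff)
  then obtain b where b: "\<And>j. list_all2 R (subsequence v (d j) (d (Suc j))) (b j)"
      "\<And>j. k (subsequence w' (c j) (c (Suc j))) = k (b j)"
    by metis
  define v' where "v' = merge (\<lambda>j i. b j ! (i - d j)) d"
  have v'_block: "v' i = b j ! (i - d j)" if "i \<in> {d j..<d (Suc j)}" for i j
    unfolding v'_def by (rule merge[OF d that])
  have v'_blocks: "subsequence v' (d j) (d (Suc j)) = b j" for j
    using list_all2_lengthD[OF b(1)[of j]] v'_block[of "d j + _" j]
    by (intro nth_equalityI) auto
  have "v' \<in> L"
    using saturatesD[OF sat c d, of w' v'] w'(2) b(2) v'_blocks by simp
  moreover have "R (v i) (v' i)" for i
  proof -
    obtain j where j: "i \<in> {d j..<d (Suc j)}"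
      using idx_sequence_interval[OF d] by blast
    then have "i - d j < d (Suc j) - d j"
      by auto
    then show ?thesis
      using b(1)[of j] j v'_block[OF j] by (auto simp: list_all2_conv_all_nth)
  qed
  ultimately show ?thesis
    unfolding proj_def by blast
qed

lemma recognizable_proj:
  assumes "recognizable L"
  shows "recognizable (proj R L)"
proof -
  obtain k :: "'a list \<Rightarrow> 'a list set"
    where k: "finite (range k)" "append_congruence k" "saturates k L"
    using assms unfolding recognizable_def by blast
  define k' where "k' u = k ` {u'. list_all2 R u u'}" for u
  have k'_append: "k' (u @ v) = {k (a @ b) | a b. k a \<in> k' u \<and> k b \<in> k' v}" for u v
  proof (intro equalityI subsetI)
    fix x
    assume "x \<in> k' (u @ v)"
    then obtain z1 z2 where "x = k (z1 @ z2)" "list_all2 R u z1" "list_all2 R v z2"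
      unfolding k'_def by (auto simp: list_all2_append1)
    then show "x \<in> {k (a @ b) | a b. k a \<in> k' u \<and> k b \<in> k' v}"
      unfolding k'_def by blast
  next
    fix x
    assume "x \<in> {k (a @ b) | a b. k a \<in> k' u \<and> k b \<in> k' v}"
    then obtain a b z1 z2 where x: "x = k (a @ b)" "k a = k z1" "k b = k z2"
      and z: "list_all2 R u z1" "list_all2 R v z2"
      unfolding k'_def by auto
    have "x = k (z1 @ z2)"
      using k(2) x unfolding append_congruence_def by metis
    moreover have "list_all2 R (u @ v) (z1 @ z2)"
      using z by (rule list_all2_appendI)
    ultimately show "x \<in> k' (u @ v)"
      unfolding k'_def by blast
  qed
  have "range k' \<subseteq> Pow (range k)"
    unfolding k'_def by auto
  then have "finite (range k')"
    using k(1) by (meson finite_Pow_iff finite_subset)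
  moreover have "append_congruence k'"
    unfolding append_congruence_def k'_append by simp
  moreover have "saturates k' (proj R L)"
    unfolding saturates_def
  proof (intro allI impI)
    fix w w' c c'
    assume c: "idx_sequence c" "idx_sequence c'"
      and "\<forall>j. k' (subsequence w (c j) (c (Suc j))) = k' (subsequence w' (c' j) (c' (Suc j)))"
    then have "k ` {u. list_all2 R (subsequence w (c j) (c (Suc j))) u} =
        k ` {u. list_all2 R (subsequence w' (c' j) (c' (Suc j))) u}" for j
      unfolding k'_def by blast
    then show "w \<in> proj R L \<longleftrightarrow> w' \<in> proj R L"
      using proj_saturated[OF k(3) c] proj_saturated[OF k(3) c(2,1)] by metis
  qed
  ultimately show ?thesis
    by (rule recognizableI)
qed

subsection \<open>Formulas as languages over an extended alphabet\<close>

lemma mso_sat_cong: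
  "\<forall>\<phi>\<in>preds \<psi>. \<forall>i. sat1 \<phi> (\<alpha>1 i) = sat2 \<phi> (\<alpha>2 i) \<Longrightarrow>
   \<forall>x\<in>fv1 \<psi>. I1 x = J1 x \<Longrightarrow> \<forall>X\<in>fv2 \<psi>. I2 X = J2 X \<Longrightarrow>
   mso_sat sat1 \<alpha>1 I1 I2 \<psi> = mso_sat sat2 \<alpha>2 J1 J2 \<psi>"
proof (induction \<psi> arbitrary: I1 I2 J1 J2)
  case (Ex1 x a)
  have "mso_sat sat1 \<alpha>1 (I1(x := i)) I2 a = mso_sat sat2 \<alpha>2 (J1(x := i)) J2 a" for i
    by (rule Ex1.IH) (use Ex1.prems in auto)
  then show ?case
    by simp
next
  case (All1 x a)
  have "mso_sat sat1 \<alpha>1 (I1(x := i)) I2 a = mso_sat sat2 \<alpha>2 (J1(x := i)) J2 a" for i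
    by (rule All1.IH) (use All1.prems in auto)
  then show ?case
    by simp
next
  case (Ex2 X a)
  have "mso_sat sat1 \<alpha>1 I1 (I2(X := S)) a = mso_sat sat2 \<alpha>2 J1 (J2(X := S)) a" for S
    by (rule Ex2.IH) (use Ex2.prems in auto)
  then show ?case
    by simp
next
  case (All2 X a)
  have "mso_sat sat1 \<alpha>1 I1 (I2(X := S)) a = mso_sat sat2 \<alpha>2 J1 (J2(X := S)) a" for S
    by (rule All2.IH) (use All2.prems in auto)
  then show ?case
    by simp
next
  case (Neg a)
  then show ?case
    by (simp add: Neg.IH)
next
  case (Conj a b)
  have "mso_sat sat1 \<alpha>1 I1 I2 a = mso_sat sat2 \<alpha>2 J1 J2 a"
    by (rule Conj.IH(1)) (use Conj.prems in auto)
  moreover have "mso_sat sat1 \<alpha>1 I1 I2 b = mso_sat sat2 \<alpha>2 J1 J2 b"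
    by (rule Conj.IH(2)) (use Conj.prems in auto)
  ultimately show ?case
    by simp
next
  case (Disj a b)
  have "mso_sat sat1 \<alpha>1 I1 I2 a = mso_sat sat2 \<alpha>2 J1 J2 a"
    by (rule Disj.IH(1)) (use Disj.prems in auto)
  moreover have "mso_sat sat1 \<alpha>1 I1 I2 b = mso_sat sat2 \<alpha>2 J1 J2 b"
    by (rule Disj.IH(2)) (use Disj.prems in auto)
  ultimately show ?case
    by simp
qed simp_all

datatype 'f letter_atom = Holds 'f | FO_Var nat | SO_Var nat

text \<open>A letter of the extended alphabet is a set of atoms: the predicates \<open>P\<^sub>\<phi>\<close> that hold at
  the position, and the variables assigned to it.  \<open>mso_sat\<close> evaluates predicates on
  tuples, so an encoded word is read as a word of 1-tuples.\<close>

definition atoms :: "'f set \<Rightarrow> nat set \<Rightarrow> nat set \<Rightarrow> 'f letter_atom set" where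
  "atoms P V1 V2 = Holds ` P \<union> FO_Var ` V1 \<union> SO_Var ` V2"

definition encoding :: "'f set \<Rightarrow> nat set \<Rightarrow> nat set \<Rightarrow> (nat \<Rightarrow> 'f letter_atom set) \<Rightarrow> bool" where
  "encoding P V1 V2 w \<longleftrightarrow> (\<forall>i. w i \<subseteq> atoms P V1 V2) \<and> (\<forall>x\<in>V1. \<exists>!i. FO_Var x \<in> w i)"

definition fo_assignment :: "(nat \<Rightarrow> 'f letter_atom set) \<Rightarrow> nat \<Rightarrow> nat" where
  "fo_assignment w x = (THE i. FO_Var x \<in> w i)"

definition so_assignment :: "(nat \<Rightarrow> 'f letter_atom set) \<Rightarrow> nat \<Rightarrow> nat set" where
  "so_assignment w X = {i. SO_Var X \<in> w i}"

definition holds_atom :: "'f \<Rightarrow> 'f letter_atom set list \<Rightarrow> bool" where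
  "holds_atom \<phi> as \<longleftrightarrow> Holds \<phi> \<in> hd as"

definition enc_lang :: "'f set \<Rightarrow> nat set \<Rightarrow> nat set \<Rightarrow> 'f mso \<Rightarrow> (nat \<Rightarrow> 'f letter_atom set) set" where
  "enc_lang P V1 V2 \<psi> = {w. encoding P V1 V2 w \<and>
     mso_sat holds_atom (\<lambda>i. [w i]) (fo_assignment w) (so_assignment w) \<psi>}"

lemma fo_assignment_iff:
  assumes "encoding P V1 V2 w" "x \<in> V1"
  shows "FO_Var x \<in> w i \<longleftrightarrow> fo_assignment w x = i"
proof -
  have unique: "\<exists>!i. FO_Var x \<in> w i"
    using assms unfolding encoding_def by blast
  show ?thesis
  proof
    assume "FO_Var x \<in> w i"
    then show "fo_assignment w x = i"
      unfolding fo_assignment_def by (rule the1_equality[OF unique])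
  next
    assume "fo_assignment w x = i"
    then show "FO_Var x \<in> w i"
      using theI'[OF unique] unfolding fo_assignment_def by simp
  qed
qed

lemma recognizable_encodings:
  assumes "finite V1"
  shows "recognizable {w. encoding P V1 V2 w}"
proof -
  have "{w. encoding P V1 V2 w} =
      - {w. \<exists>i. \<not> w i \<subseteq> atoms P V1 V2} \<inter> (\<Inter>x\<in>V1. {w. \<exists>!i. FO_Var x \<in> w i})"
    unfolding encoding_def by (simp add: set_eq_iff)
  then show ?thesis
    by (simp only:) (intro recognizable_Int recognizable_Compl recognizable_ex_letter
        recognizable_INT recognizable_unique_letter assms)
qed

lemma enc_lang_Neg: "enc_lang P V1 V2 (Neg a) = {w. encoding P V1 V2 w} \<inter> - enc_lang P V1 V2 a"
  unfolding enc_lang_def by auto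

lemma enc_lang_Conj: "enc_lang P V1 V2 (Conj a b) = enc_lang P V1 V2 a \<inter> enc_lang P V1 V2 b"
  unfolding enc_lang_def by auto

lemma enc_lang_Disj: "enc_lang P V1 V2 (Disj a b) = enc_lang P V1 V2 a \<union> enc_lang P V1 V2 b"
  unfolding enc_lang_def by auto

lemma enc_lang_All1:
  "enc_lang P V1 V2 (All1 x a) = {w. encoding P V1 V2 w} \<inter> - enc_lang P V1 V2 (Ex1 x (Neg a))"
  unfolding enc_lang_def by auto

lemma enc_lang_All2:
  "enc_lang P V1 V2 (All2 X a) = {w. encoding P V1 V2 w} \<inter> - enc_lang P V1 V2 (Ex2 X (Neg a))"
  unfolding enc_lang_def by auto

lemma enc_lang_atomic:
  assumes "x \<in> V1"
  shows "enc_lang P V1 V2 (Zero x) = {w. encoding P V1 V2 w} \<inter> {w. FO_Var x \<in> w 0}"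
    and "enc_lang P V1 V2 (Pred \<phi> x) =
      {w. encoding P V1 V2 w} \<inter> {w. \<exists>i. FO_Var x \<in> w i \<and> Holds \<phi> \<in> w i}"
    and "enc_lang P V1 V2 (Mem x X) =
      {w. encoding P V1 V2 w} \<inter> {w. \<exists>i. FO_Var x \<in> w i \<and> SO_Var X \<in> w i}"
    and "y \<in> V1 \<Longrightarrow> enc_lang P V1 V2 (Eq x y) =
      {w. encoding P V1 V2 w} \<inter> {w. \<exists>i. FO_Var x \<in> w i \<and> FO_Var y \<in> w i}"
    and "y \<in> V1 \<Longrightarrow> enc_lang P V1 V2 (Less x y) =
      {w. encoding P V1 V2 w} \<inter> {w. \<exists>i j. i < j \<and> FO_Var x \<in> w i \<and> FO_Var y \<in> w j}"
    and "y \<in> V1 \<Longrightarrow> enc_lang P V1 V2 (Succ x y) =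
      {w. encoding P V1 V2 w} \<inter> {w. \<exists>i. FO_Var x \<in> w i \<and> FO_Var y \<in> w (Suc i)}"
  using assms
  by (auto simp: enc_lang_def holds_atom_def so_assignment_def fo_assignment_iff)

definition reassign :: "'a \<Rightarrow> nat set \<Rightarrow> (nat \<Rightarrow> 'a set) \<Rightarrow> nat \<Rightarrow> 'a set" where
  "reassign z S w i = w i - {z} \<union> (if i \<in> S then {z} else {})"

lemma proj_agree_outside:
  "proj (\<lambda>a b. a - {z} = b - {z}) L = {w. \<exists>S. reassign z S w \<in> L}"
proof (intro equalityI subsetI)
  fix w
  assume "w \<in> proj (\<lambda>a b. a - {z} = b - {z}) L"
  then obtain w' where agree: "\<forall>i. w i - {z} = w' i - {z}" and "w' \<in> L"
    unfolding proj_def by blast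
  moreover have "reassign z {i. z \<in> w' i} w = w'"
    using agree unfolding reassign_def by (auto simp: fun_eq_iff)
  ultimately show "w \<in> {w. \<exists>S. reassign z S w \<in> L}"
    by (metis (mono_tags) mem_Collect_eq)
next
  fix w
  assume "w \<in> {w. \<exists>S. reassign z S w \<in> L}"
  then obtain S where "reassign z S w \<in> L"
    by blast
  moreover have "\<forall>i. w i - {z} = reassign z S w i - {z}"
    unfolding reassign_def by auto
  ultimately show "w \<in> proj (\<lambda>a b. a - {z} = b - {z}) L"
    unfolding proj_def by blast
qed

lemma mso_sat_reassign:
  assumes "\<forall>\<phi>. z \<noteq> Holds \<phi>"
  shows "mso_sat holds_atom (\<lambda>i. [reassign z S w i]) I1 I2 \<psi> = mso_sat holds_atom (\<lambda>i. [w i]) I1 I2 \<psi>"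
  using assms by (intro mso_sat_cong) (auto simp: holds_atom_def reassign_def)

lemma fo_assignment_reassign:
  "z \<noteq> FO_Var y \<Longrightarrow> fo_assignment (reassign z S w) y = fo_assignment w y"
  unfolding fo_assignment_def reassign_def by simp

lemma fo_assignment_reassign_same: "fo_assignment (reassign (FO_Var x) {i} w) x = i"
  unfolding fo_assignment_def reassign_def by auto

lemma so_assignment_reassign:
  "so_assignment (reassign z S w) Y = (if z = SO_Var Y then S else so_assignment w Y)"
  unfolding so_assignment_def reassign_def by auto

lemma encoding_reassign_FO_Var:
  assumes "encoding P V1 V2 w"
  shows "encoding P (insert x V1) V2 (reassign (FO_Var x) S w) \<longleftrightarrow> (\<exists>i. S = {i})"
proof -
  have memb: "FO_Var y \<in> reassign (FO_Var x) S w i \<longleftrightarrow> (if y = x then i \<in> S else FO_Var y \<in> w i)"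
    for y i
    unfolding reassign_def by auto
  have others: "\<forall>y\<in>V1 - {x}. \<exists>!i. FO_Var y \<in> reassign (FO_Var x) S w i"
    using assms unfolding encoding_def memb by simp
  have "(\<forall>y\<in>insert x V1. \<exists>!i. FO_Var y \<in> reassign (FO_Var x) S w i) \<longleftrightarrow>
      (\<exists>!i. FO_Var x \<in> reassign (FO_Var x) S w i)"
    using others unfolding insert_Diff_single[of x V1, symmetric] ball_simps(7) by blast
  also have "\<dots> \<longleftrightarrow> (\<exists>!i. i \<in> S)"
    unfolding memb by simp
  also have "\<dots> \<longleftrightarrow> (\<exists>i. S = {i})"
    by auto
  finally have unique: "(\<forall>y\<in>insert x V1. \<exists>!i. FO_Var y \<in> reassign (FO_Var x) S w i) \<longleftrightarrow> (\<exists>i. S = {i})" .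
  have "\<forall>i. reassign (FO_Var x) S w i \<subseteq> atoms P (insert x V1) V2"
    using assms unfolding encoding_def reassign_def atoms_def by auto
  then show ?thesis
    unfolding encoding_def unique by blast
qed

lemma encoding_reassign_SO_Var:
  assumes "encoding P V1 V2 w"
  shows "encoding P V1 (insert X V2) (reassign (SO_Var X) S w)"
  using assms unfolding encoding_def reassign_def atoms_def by auto

lemma enc_lang_encoding: "enc_lang P V1 V2 \<psi> \<subseteq> {w. encoding P V1 V2 w}"
  unfolding enc_lang_def by auto

lemma enc_lang_Ex1:
  "enc_lang P V1 V2 (Ex1 x b) =
     {w. encoding P V1 V2 w} \<inter> proj (\<lambda>a b. a - {FO_Var x} = b - {FO_Var x}) (enc_lang P (insert x V1) V2 b)"
proof -
  have "w \<in> enc_lang P V1 V2 (Ex1 x b) \<longleftrightarrow> (\<exists>S. reassign (FO_Var x) S w \<in> enc_lang P (insert x V1) V2 b)"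
    if w: "encoding P V1 V2 w" for w
  proof -
    have "reassign (FO_Var x) S w \<in> enc_lang P (insert x V1) V2 b \<Longrightarrow> \<exists>i. S = {i}" for S
      using encoding_reassign_FO_Var[OF w] unfolding enc_lang_def by blast
    moreover have "reassign (FO_Var x) {i} w \<in> enc_lang P (insert x V1) V2 b \<longleftrightarrow>
        mso_sat holds_atom (\<lambda>i. [w i]) ((fo_assignment w)(x := i)) (so_assignment w) b" for i
    proof -
      have "fo_assignment (reassign (FO_Var x) {i} w) = (fo_assignment w)(x := i)"
        by (auto simp: fun_eq_iff fo_assignment_reassign fo_assignment_reassign_same)
      moreover have "so_assignment (reassign (FO_Var x) {i} w) = so_assignment w"
        by (simp add: fun_eq_iff so_assignment_reassign)
      ultimately show ?thesis
        using encoding_reassign_FO_Var[OF w] by (simp add: enc_lang_def mso_sat_reassign)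
    qed
    moreover have "w \<in> enc_lang P V1 V2 (Ex1 x b) \<longleftrightarrow>
        (\<exists>i. mso_sat holds_atom (\<lambda>i. [w i]) ((fo_assignment w)(x := i)) (so_assignment w) b)"
      using w by (simp add: enc_lang_def)
    ultimately show ?thesis
      by blast
  qed
  then show ?thesis
    unfolding proj_agree_outside using enc_lang_encoding by blast
qed

lemma enc_lang_Ex2:
  "enc_lang P V1 V2 (Ex2 X b) =
     {w. encoding P V1 V2 w} \<inter> proj (\<lambda>a b. a - {SO_Var X} = b - {SO_Var X}) (enc_lang P V1 (insert X V2) b)"
proof -
  have "w \<in> enc_lang P V1 V2 (Ex2 X b) \<longleftrightarrow> (\<exists>S. reassign (SO_Var X) S w \<in> enc_lang P V1 (insert X V2) b)"
    if "encoding P V1 V2 w" for w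
  proof -
    have "fo_assignment (reassign (SO_Var X) S w) = fo_assignment w" for S
      by (simp add: fun_eq_iff fo_assignment_reassign)
    moreover have "so_assignment (reassign (SO_Var X) S w) = (so_assignment w)(X := S)" for S
      by (auto simp: fun_eq_iff so_assignment_reassign)
    ultimately show ?thesis
      unfolding enc_lang_def using that encoding_reassign_SO_Var[OF that] by (simp add: mso_sat_reassign)
  qed
  then show ?thesis
    unfolding proj_agree_outside using enc_lang_encoding by blast
qed

lemma recognizable_encodings_Int:
  "finite V1 \<Longrightarrow> recognizable L \<Longrightarrow> recognizable ({w. encoding P V1 V2 w} \<inter> L)"
  by (intro recognizable_Int recognizable_encodings)

lemma recognizable_enc_lang: "finite V1 \<Longrightarrow> fv1 \<psi> \<subseteq> V1 \<Longrightarrow> recognizable (enc_lang P V1 V2 \<psi>)"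
proof (induction \<psi> arbitrary: V1 V2)
  case (Neg a)
  then have "recognizable (enc_lang P V1 V2 a)"
    by simp
  then show ?case
    unfolding enc_lang_Neg using Neg.prems(1) by (intro recognizable_encodings_Int recognizable_Compl)
next
  case (Conj a b)
  then show ?case
    unfolding enc_lang_Conj by (intro recognizable_Int) simp_all
next
  case (Disj a b)
  then show ?case
    unfolding enc_lang_Disj by (intro recognizable_Un) simp_all
next
  case (Ex1 x a)
  have "recognizable (enc_lang P (insert x V1) V2 a)"
    by (rule Ex1.IH) (use Ex1.prems in auto)
  then show ?case
    unfolding enc_lang_Ex1 using Ex1.prems(1) by (intro recognizable_encodings_Int recognizable_proj)
next
  case (All1 x a)
  have "recognizable (enc_lang P (insert x V1) V2 a)"
    by (rule All1.IH) (use All1.prems in auto)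
  then show ?case
    unfolding enc_lang_All1 enc_lang_Ex1 enc_lang_Neg using All1.prems(1)
    by (intro recognizable_encodings_Int recognizable_Compl recognizable_proj finite.insertI)
next
  case (Ex2 X a)
  have "recognizable (enc_lang P V1 (insert X V2) a)"
    by (rule Ex2.IH) (use Ex2.prems in auto)
  then show ?case
    unfolding enc_lang_Ex2 using Ex2.prems(1) by (intro recognizable_encodings_Int recognizable_proj)
next
  case (All2 X a)
  have "recognizable (enc_lang P V1 (insert X V2) a)"
    by (rule All2.IH) (use All2.prems in auto)
  then show ?case
    unfolding enc_lang_All2 enc_lang_Ex2 enc_lang_Neg using All2.prems(1)
    by (intro recognizable_encodings_Int recognizable_Compl recognizable_proj)
qed (auto simp: enc_lang_atomic intro!: recognizable_encodings_Int recognizable_first_letter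
    recognizable_ex_letter recognizable_ex_less recognizable_ex_succ)

subsection \<open>Ramsey factorizations and Buechi acceptance\<close>

definition factor_lang :: "('a list \<Rightarrow> 'c) \<Rightarrow> 'c \<Rightarrow> 'c \<Rightarrow> (nat \<Rightarrow> 'a) set" where
  "factor_lang k s e = {w. \<exists>c. idx_sequence c \<and> k (prefix (c 1) w) = s \<and>
     (\<forall>j. k (subsequence w (c (Suc j)) (c (Suc (Suc j)))) = e)}"

lemma ramsey_factorization:
  fixes k :: "'a list \<Rightarrow> 'c"
  assumes "finite (range k)"
  shows "\<exists>s e. w \<in> factor_lang k s e"
proof -
  obtain g :: "'c \<Rightarrow> nat" and r where g: "g ` range k = {i. i < r}" "inj_on g (range k)"
    using finite_imp_inj_to_nat_seg[OF assms] by blast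
  define f where "f X = g (k (subsequence w (Min X) (Max X)))" for X :: "nat set"
  have "infinite {i :: nat. 0 < i}"
    unfolding infinite_nat_iff_unbounded by auto
  moreover have "\<forall>x\<in>{i. 0 < i}. \<forall>y\<in>{i. 0 < i}. x \<noteq> y \<longrightarrow> f {x, y} < r"
    using g(1) unfolding f_def by blast
  ultimately obtain Y t where Y: "Y \<subseteq> {i. 0 < i}" "infinite Y"
    and mono: "\<forall>x\<in>Y. \<forall>y\<in>Y. x \<noteq> y \<longrightarrow> f {x, y} = t"
    using Ramsey2[of "{i. 0 < i}" f r] by blast
  define c where "c j = (case j of 0 \<Rightarrow> 0 | Suc j' \<Rightarrow> enumerate Y j')" for j
  have c: "idx_sequence c"
    unfolding c_def using Y by (intro idx_sequence_enumerate) auto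
  have block: "g (k (subsequence w (c (Suc j)) (c (Suc (Suc j))))) = t" for j
  proof -
    let ?x = "enumerate Y j" and ?y = "enumerate Y (Suc j)"
    have "?x < ?y" "?x \<in> Y" "?y \<in> Y"
      using enumerate_step enumerate_in_set Y(2) by blast+
    then have "f {?x, ?y} = t" and "Min {?x, ?y} = ?x" and "Max {?x, ?y} = ?y"
      using mono by auto
    then show ?thesis
      unfolding c_def f_def by simp
  qed
  have "k (subsequence w (c (Suc j)) (c (Suc (Suc j)))) = k (subsequence w (c (Suc 0)) (c (Suc (Suc 0))))"
    for j
    using block[of j] block[of 0] g(2) by (metis inj_onD rangeI)
  with c show ?thesis
    unfolding factor_lang_def by blast
qed

lemma saturates_factor_lang:
  assumes "saturates k L" and "w \<in> factor_lang k s e" and "w' \<in> factor_lang k s e"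
  shows "w \<in> L \<longleftrightarrow> w' \<in> L"
proof -
  obtain c c' where c: "idx_sequence c" "k (prefix (c 1) w) = s"
      "\<And>j. k (subsequence w (c (Suc j)) (c (Suc (Suc j)))) = e"
    and c': "idx_sequence c'" "k (prefix (c' 1) w') = s"
      "\<And>j. k (subsequence w' (c' (Suc j)) (c' (Suc (Suc j)))) = e"
    using assms(2,3) unfolding factor_lang_def by blast
  have "k (subsequence w (c j) (c (Suc j))) = k (subsequence w' (c' j) (c' (Suc j)))" for j
    using c c' by (cases j) (simp_all add: idx_sequence_def)
  then show ?thesis
    by (rule saturatesD[OF assms(1) c(1) c'(1)])
qed

definition nba_accepts ::
    "('s \<Rightarrow> 'a \<Rightarrow> 's \<Rightarrow> bool) \<Rightarrow> 's \<Rightarrow> ('s \<Rightarrow> bool) \<Rightarrow> (nat \<Rightarrow> 'a) \<Rightarrow> bool" where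
  "nba_accepts \<delta> q0 F w \<longleftrightarrow>
     (\<exists>\<rho>. \<rho> 0 = q0 \<and> (\<forall>i. \<delta> (\<rho> i) (w i) (\<rho> (Suc i))) \<and> (\<exists>\<^sub>\<infinity>i. F (\<rho> i)))"

definition class_step :: "('a list \<Rightarrow> 'c) \<Rightarrow> 'c \<Rightarrow> 'a \<Rightarrow> 'c" where
  "class_step k C a = k ((SOME u. k u = C) @ [a])"

lemma class_step: "append_congruence k \<Longrightarrow> class_step k (k u) a = k (u @ [a])"
  unfolding class_step_def append_congruence_def by (metis (mono_tags) someI)

text \<open>\<open>Prefix C\<close> reads the first factor, \<open>C\<close> being the class of the part read so far;
  \<open>Loop e C b\<close> reads factors of class \<open>e\<close>, \<open>C\<close> being the class of the current factor so far
  and \<open>b\<close> marking that a factor has just been completed.  The automaton guesses the factor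
  boundaries and the type \<open>(s, e)\<close> of the factorization, which must satisfy \<open>G\<close>.\<close>

datatype 'c factor_state = Prefix 'c | Loop 'c 'c bool

fun factor_step ::
    "('a list \<Rightarrow> 'c) \<Rightarrow> ('c \<Rightarrow> 'c \<Rightarrow> bool) \<Rightarrow> 'c factor_state \<Rightarrow> 'a \<Rightarrow> 'c factor_state \<Rightarrow> bool" where
  "factor_step k G (Prefix C) a q \<longleftrightarrow>
     q = Prefix (class_step k C a) \<or> (\<exists>e. G (class_step k C a) e \<and> q = Loop e (k []) True)"
| "factor_step k G (Loop e C b) a q \<longleftrightarrow>
     q = Loop e (class_step k C a) False \<or> (class_step k C a = e \<and> q = Loop e (k []) True)"

fun at_boundary :: "'c factor_state \<Rightarrow> bool" where
  "at_boundary (Prefix C) = False"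
| "at_boundary (Loop e C b) = b"

definition factor_run ::
    "('a list \<Rightarrow> 'c) \<Rightarrow> 'c \<Rightarrow> (nat \<Rightarrow> nat) \<Rightarrow> (nat \<Rightarrow> 'a) \<Rightarrow> nat \<Rightarrow> 'c factor_state" where
  "factor_run k e c w = merge (\<lambda>j i. if j = 0 then Prefix (k (prefix i w))
     else Loop e (k (subsequence w (c j) i)) (i = c j)) c"

lemma factor_run_block:
  "idx_sequence c \<Longrightarrow> i \<in> {c j..<c (Suc j)} \<Longrightarrow> factor_run k e c w i =
    (if j = 0 then Prefix (k (prefix i w)) else Loop e (k (subsequence w (c j) i)) (i = c j))"
  unfolding factor_run_def by (rule merge)

lemma factor_run_boundary:
  assumes "idx_sequence c"
  shows "factor_run k e c w (c (Suc j)) = Loop e (k []) True"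
  using factor_run_block[OF assms idx_sequence_idx[OF assms, of "Suc j"]] by simp

lemma factor_run_step:
  assumes cong: "append_congruence k" and c: "idx_sequence c" and "G (k (prefix (c 1) w)) e"
    and e: "\<And>j. k (subsequence w (c (Suc j)) (c (Suc (Suc j)))) = e"
  shows "factor_step k G (factor_run k e c w i) (w i) (factor_run k e c w (Suc i))"
proof -
  obtain j where j: "i \<in> {c j..<c (Suc j)}"
    using idx_sequence_interval[OF c] by blast
  have step: "class_step k (k (subsequence w (c j) i)) (w i) = k (subsequence w (c j) (Suc i))"
    using j by (simp add: class_step[OF cong])
  show ?thesis
  proof (cases "Suc i = c (Suc j)")
    case True
    then have "class_step k (k (subsequence w (c j) i)) (w i) = (if j = 0 then k (prefix (c 1) w) else e)"
      using step c e[of "j - 1"] by (cases j) (simp_all add: idx_sequence_def)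
    then show ?thesis
      using factor_run_block[OF c j, of k e w] factor_run_boundary[OF c, of k e w j] True assms(3) c
      by (cases j) (simp_all add: idx_sequence_def)
  next
    case False
    then have "Suc i \<in> {c j..<c (Suc j)}" and "Suc i \<noteq> c j"
      using j by auto
    then show ?thesis
      using factor_run_block[OF c j, of k e w] factor_run_block[OF c, of "Suc i" j k e w] step c
      by (cases j) (simp_all add: idx_sequence_def)
  qed
qed

lemma nba_accepts_factor_stepI:
  assumes cong: "append_congruence k" and "G s e" and "w \<in> factor_lang k s e"
  shows "nba_accepts (factor_step k G) (Prefix (k [])) at_boundary w"
proof -
  obtain c where c: "idx_sequence c" and s: "k (prefix (c 1) w) = s"
    and e: "\<And>j. k (subsequence w (c (Suc j)) (c (Suc (Suc j)))) = e"
    using assms(3) unfolding factor_lang_def by blast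
  have "factor_run k e c w 0 = Prefix (k [])"
    using factor_run_block[OF c idx_sequence_idx[OF c, of 0], of k e w] c
    by (simp add: idx_sequence_def)
  moreover have "\<exists>\<^sub>\<infinity>i. at_boundary (factor_run k e c w i)"
    unfolding INFM_nat
  proof
    fix m
    have "m < c (Suc m)"
      using idx_sequence_ge[OF c, of "Suc m"] by simp
    moreover have "at_boundary (factor_run k e c w (c (Suc m)))"
      by (simp add: factor_run_boundary[OF c])
    ultimately show "\<exists>i>m. at_boundary (factor_run k e c w i)"
      by blast
  qed
  ultimately show ?thesis
    unfolding nba_accepts_def using factor_run_step[OF cong c _ e] assms(2) s by blast
qed

lemma factor_run_prefix:
  assumes cong: "append_congruence k" and run: "\<forall>i. factor_step k G (\<rho> i) (w i) (\<rho> (Suc i))"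
    and start: "\<rho> 0 = Prefix (k [])" and before: "\<forall>m\<le>i. \<not> at_boundary (\<rho> m)"
  shows "\<rho> i = Prefix (k (prefix i w))"
  using before
proof (induction i)
  case 0
  then show ?case
    using start by simp
next
  case (Suc i)
  then have "\<rho> i = Prefix (k (prefix i w))"
    by simp
  then have "factor_step k G (Prefix (k (prefix i w))) (w i) (\<rho> (Suc i))"
    using run by metis
  moreover have "\<not> at_boundary (\<rho> (Suc i))"
    using Suc.prems by blast
  ultimately show ?case
    using class_step[OF cong, of "prefix i w" "w i"] by auto
qed

lemma factor_run_loop:
  assumes cong: "append_congruence k" and run: "\<forall>i. factor_step k G (\<rho> i) (w i) (\<rho> (Suc i))"
    and start: "\<rho> r = Loop e (k []) True" and "r < t"
    and between: "\<forall>m. r < m \<and> m < t \<longrightarrow> \<not> at_boundary (\<rho> m)"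
  shows "\<rho> t = Loop e (k (subsequence w r t)) False \<or>
    (\<rho> t = Loop e (k []) True \<and> k (subsequence w r t) = e)"
  using \<open>r < t\<close> between
proof (induction t)
  case 0
  then show ?case
    by simp
next
  case (Suc t)
  have "\<rho> t = Loop e (k (subsequence w r t)) (t = r)"
  proof (cases "t = r")
    case True
    then show ?thesis
      using start by simp
  next
    case False
    then have "\<rho> t = Loop e (k (subsequence w r t)) False \<or> \<rho> t = Loop e (k []) True"
      using Suc by auto
    moreover have "\<not> at_boundary (\<rho> t)"
      using Suc.prems False by simp
    ultimately show ?thesis
      using False by auto
  qed
  moreover have "r \<le> t"
    using Suc.prems(1) by simp
  ultimately show ?case
    using run[rule_format, of t] class_step[OF cong, of "subsequence w r t" "w t"] by auto
qed

lemma factor_run_first_boundary: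
  assumes cong: "append_congruence k" and run: "\<forall>i. factor_step k G (\<rho> i) (w i) (\<rho> (Suc i))"
    and start: "\<rho> 0 = Prefix (k [])"
    and "at_boundary (\<rho> p)" and "\<forall>m<p. \<not> at_boundary (\<rho> m)"
  shows "\<exists>e. G (k (prefix p w)) e \<and> \<rho> p = Loop e (k []) True"
proof -
  obtain p' where p': "p = Suc p'"
    using assms(4) start by (cases p) auto
  then have "\<rho> p' = Prefix (k (prefix p' w))"
    using assms(5) by (intro factor_run_prefix[OF cong run start]) auto
  then show ?thesis
    using run[rule_format, of p'] assms(4) class_step[OF cong, of "prefix p' w" "w p'"]
    unfolding p' by auto
qed

lemma factor_run_next_boundary:
  assumes cong: "append_congruence k" and run: "\<forall>i. factor_step k G (\<rho> i) (w i) (\<rho> (Suc i))"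
    and "\<rho> r = Loop e (k []) True" and "r < t" and "at_boundary (\<rho> t)"
    and "\<forall>m. r < m \<and> m < t \<longrightarrow> \<not> at_boundary (\<rho> m)"
  shows "\<rho> t = Loop e (k []) True \<and> k (subsequence w r t) = e"
  using factor_run_loop[OF cong run assms(3,4,6)] assms(5) by auto

lemma nba_accepts_factor_stepD:
  assumes cong: "append_congruence k"
    and "nba_accepts (factor_step k G) (Prefix (k [])) at_boundary w"
  shows "\<exists>s e. G s e \<and> w \<in> factor_lang k s e"
proof -
  obtain \<rho> where start: "\<rho> 0 = Prefix (k [])"
    and run: "\<forall>i. factor_step k G (\<rho> i) (w i) (\<rho> (Suc i))"
    and inf: "\<exists>\<^sub>\<infinity>i. at_boundary (\<rho> i)"
    using assms(2) unfolding nba_accepts_def by blast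
  define R where "R = {i. at_boundary (\<rho> i)}"
  have R: "infinite R"
    using inf unfolding R_def by (simp add: INFM_iff_infinite)
  let ?r = "enumerate R"
  have "\<forall>m<?r 0. \<not> at_boundary (\<rho> m)"
    using not_less_Least unfolding enumerate_0 R_def by blast
  then obtain e where "G (k (prefix (?r 0) w)) e" and first: "\<rho> (?r 0) = Loop e (k []) True"
    using factor_run_first_boundary[OF cong run start] enumerate_in_set[OF R, of 0]
    unfolding R_def by blast
  have next_boundary: "\<rho> (?r (Suc j)) = Loop e (k []) True \<and> k (subsequence w (?r j) (?r (Suc j))) = e"
    if "\<rho> (?r j) = Loop e (k []) True" for j
    using factor_run_next_boundary[OF cong run that enumerate_step[OF R]]
      enumerate_in_set[OF R] enumerate_gap[OF R] unfolding R_def by blast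
  have "\<rho> (?r j) = Loop e (k []) True" for j
    by (induction j) (use first next_boundary in auto)
  then have "k (subsequence w (?r j) (?r (Suc j))) = e" for j
    using next_boundary by blast
  moreover have "0 \<notin> R"
    using start unfolding R_def by simp
  then have "idx_sequence (\<lambda>j. case j of 0 \<Rightarrow> 0 | Suc j' \<Rightarrow> ?r j')"
    using R by (intro idx_sequence_enumerate)
  ultimately have "w \<in> factor_lang k (k (prefix (?r 0) w)) e"
    unfolding factor_lang_def by fastforce
  with \<open>G (k (prefix (?r 0) w)) e\<close> show ?thesis
    by blast
qed

lemma nba_accepts_factor_step_iff:
  "append_congruence k \<Longrightarrow>
    nba_accepts (factor_step k G) (Prefix (k [])) at_boundary w \<longleftrightarrow> (\<exists>s e. G s e \<and> w \<in> factor_lang k s e)"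
  using nba_accepts_factor_stepI nba_accepts_factor_stepD by metis

lemma recognizable_imp_nba:
  fixes L :: "(nat \<Rightarrow> 'a) set"
  assumes "recognizable L"
  obtains \<delta> :: "'a list set factor_state \<Rightarrow> 'a \<Rightarrow> 'a list set factor_state \<Rightarrow> bool" and q0 F S
  where "finite S" "q0 \<in> S" "\<And>q a q'. q \<in> S \<Longrightarrow> \<delta> q a q' \<Longrightarrow> q' \<in> S"
    and "\<And>w. nba_accepts \<delta> q0 F w \<longleftrightarrow> w \<in> L"
proof -
  obtain k :: "'a list \<Rightarrow> 'a list set"
    where k: "finite (range k)" "append_congruence k" "saturates k L"
    using assms unfolding recognizable_def by blast
  define G where "G s e \<longleftrightarrow> factor_lang k s e \<inter> L \<noteq> {}" for s e
  define S where "S = Prefix ` range k \<union> (\<lambda>(e, C, b). Loop e C b) ` (range k \<times> range k \<times> UNIV)"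
  have "finite S"
    unfolding S_def using k(1) by simp
  moreover have "Prefix (k []) \<in> S"
    unfolding S_def by simp
  moreover have "q' \<in> S" if "q \<in> S" "factor_step k G q a q'" for q a q'
  proof -
    have "class_step k C a \<in> range k" for C
      unfolding class_step_def by simp
    moreover have "e \<in> range k" if "G s e" for s e
      using that unfolding G_def factor_lang_def by blast
    ultimately show ?thesis
      using that unfolding S_def by (cases q) (auto simp: image_iff)
  qed
  moreover have "nba_accepts (factor_step k G) (Prefix (k [])) at_boundary w \<longleftrightarrow> w \<in> L" for w
  proof -
    obtain s e where "w \<in> factor_lang k s e"
      using ramsey_factorization[OF k(1)] by blast
    then show ?thesis
      unfolding nba_accepts_factor_step_iff[OF k(2)] G_def
      using saturates_factor_lang[OF k(3)] by blast
  qed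
  ultimately show ?thesis
    using that by blast
qed

subsection \<open>Buechi automata over \<open>M\<^sup>n\<close>\<close>

definition true_preds :: "'f set \<Rightarrow> ('f \<Rightarrow> 'm list \<Rightarrow> bool) \<Rightarrow> 'm list \<Rightarrow> 'f set" where
  "true_preds P sat ms = {\<phi> \<in> P. sat \<phi> ms}"

lemma mso_lang_eq_enc_lang:
  assumes "mso_sentence \<psi>"
  shows "mso_lang sat n \<psi> =
    {\<alpha> \<in> words n. (\<lambda>i. Holds ` true_preds (preds \<psi>) sat (\<alpha> i)) \<in> enc_lang (preds \<psi>) {} {} \<psi>}"
proof -
  have "mso_sat holds_atom (\<lambda>i. [Holds ` true_preds (preds \<psi>) sat (\<alpha> i)]) I1 I2 \<psi> =
      mso_sat sat \<alpha> (\<lambda>_. 0) (\<lambda>_. {}) \<psi>" for \<alpha> I1 I2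
    using assms unfolding mso_sentence_def
    by (intro mso_sat_cong) (auto simp: holds_atom_def true_preds_def)
  moreover have "encoding (preds \<psi>) {} {} (\<lambda>i. Holds ` true_preds (preds \<psi>) sat (\<alpha> i))" for \<alpha>
    unfolding encoding_def atoms_def true_preds_def by auto
  ultimately show ?thesis
    unfolding mso_lang_def enc_lang_def by auto
qed

lemma logic_closed_nonempty: "logic_closed Phi sat \<Longrightarrow> Phi n \<noteq> {}"
  unfolding logic_closed_def by blast

lemma logic_closed_neg:
  "logic_closed Phi sat \<Longrightarrow> \<phi> \<in> Phi n \<Longrightarrow> \<exists>\<chi>\<in>Phi n. \<forall>ms\<in>tuples n. sat \<chi> ms \<longleftrightarrow> \<not> sat \<phi> ms"
  unfolding logic_closed_def by blast

lemma logic_closed_conj: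
  "logic_closed Phi sat \<Longrightarrow> \<phi> \<in> Phi n \<Longrightarrow> \<psi> \<in> Phi n \<Longrightarrow>
    \<exists>\<chi>\<in>Phi n. \<forall>ms\<in>tuples n. sat \<chi> ms \<longleftrightarrow> sat \<phi> ms \<and> sat \<psi> ms"
  unfolding logic_closed_def by blast

lemma exists_valuation_formula:
  assumes lc: "logic_closed Phi sat" and "finite P" and "P \<subseteq> Phi n" and "B \<subseteq> P"
  shows "\<exists>\<chi>\<in>Phi n. \<forall>ms\<in>tuples n. sat \<chi> ms \<longleftrightarrow> true_preds P sat ms = B"
  using assms(2-4)
proof (induction P arbitrary: B rule: finite_induct)
  case empty
  obtain \<phi> where \<phi>: "\<phi> \<in> Phi n"
    using logic_closed_nonempty[OF lc] by blast
  obtain \<nu> where \<nu>: "\<nu> \<in> Phi n" "\<forall>ms\<in>tuples n. sat \<nu> ms \<longleftrightarrow> \<not> sat \<phi> ms"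
    using logic_closed_neg[OF lc \<phi>] by blast
  obtain \<kappa> where \<kappa>: "\<kappa> \<in> Phi n" "\<forall>ms\<in>tuples n. sat \<kappa> ms \<longleftrightarrow> sat \<phi> ms \<and> sat \<nu> ms"
    using logic_closed_conj[OF lc \<phi> \<nu>(1)] by blast
  obtain \<tau> where \<tau>: "\<tau> \<in> Phi n" "\<forall>ms\<in>tuples n. sat \<tau> ms \<longleftrightarrow> \<not> sat \<kappa> ms"
    using logic_closed_neg[OF lc \<kappa>(1)] by blast
  have "\<forall>ms\<in>tuples n. sat \<tau> ms"
    using \<nu>(2) \<kappa>(2) \<tau>(2) by simp
  moreover have "true_preds {} sat ms = B" for ms
    using empty unfolding true_preds_def by simp
  ultimately show ?case
    using \<tau>(1) by blast
next
  case (insert \<phi> P)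
  have "P \<subseteq> Phi n" "B - {\<phi>} \<subseteq> P" "\<phi> \<in> Phi n"
    using insert.prems by auto
  then obtain \<chi> where \<chi>: "\<chi> \<in> Phi n" "\<forall>ms\<in>tuples n. sat \<chi> ms \<longleftrightarrow> true_preds P sat ms = B - {\<phi>}"
    using insert.IH by meson
  obtain lit where lit: "lit \<in> Phi n" "\<forall>ms\<in>tuples n. sat lit ms \<longleftrightarrow> (sat \<phi> ms \<longleftrightarrow> \<phi> \<in> B)"
  proof (cases "\<phi> \<in> B")
    case True
    then show ?thesis
      using that[of \<phi>] \<open>\<phi> \<in> Phi n\<close> by simp
  next
    case False
    obtain \<nu> where "\<nu> \<in> Phi n" "\<forall>ms\<in>tuples n. sat \<nu> ms \<longleftrightarrow> \<not> sat \<phi> ms"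
      using logic_closed_neg[OF lc \<open>\<phi> \<in> Phi n\<close>] by blast
    then show ?thesis
      using that[of \<nu>] False by simp
  qed
  obtain \<chi>' where \<chi>': "\<chi>' \<in> Phi n" "\<forall>ms\<in>tuples n. sat \<chi>' ms \<longleftrightarrow> sat \<chi> ms \<and> sat lit ms"
    using logic_closed_conj[OF lc \<chi>(1) lit(1)] by blast
  have "true_preds (insert \<phi> P) sat ms = B \<longleftrightarrow>
      true_preds P sat ms = B - {\<phi>} \<and> (sat \<phi> ms \<longleftrightarrow> \<phi> \<in> B)" for ms
    using insert.hyps(2) insert.prems(2) unfolding true_preds_def by auto
  then have "\<forall>ms\<in>tuples n. sat \<chi>' ms \<longleftrightarrow> true_preds (insert \<phi> P) sat ms = B"
    using \<chi>(2) lit(2) \<chi>'(2) by simp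
  with \<chi>'(1) show ?case
    by blast
qed

lemma nba_accepts_rename:
  assumes inj: "inj_on f S" and "q0 \<in> S" and closed: "\<And>q a q'. q \<in> S \<Longrightarrow> \<delta> q a q' \<Longrightarrow> q' \<in> S"
  shows "nba_accepts (\<lambda>p a p'. \<exists>q\<in>S. \<exists>q'\<in>S. p = f q \<and> p' = f q' \<and> \<delta> q a q') (f q0)
      (\<lambda>p. \<exists>q\<in>S. p = f q \<and> F q) w \<longleftrightarrow> nba_accepts \<delta> q0 F w"
proof
  assume "nba_accepts (\<lambda>p a p'. \<exists>q\<in>S. \<exists>q'\<in>S. p = f q \<and> p' = f q' \<and> \<delta> q a q') (f q0)
      (\<lambda>p. \<exists>q\<in>S. p = f q \<and> F q) w"
  then obtain \<sigma> where \<sigma>0: "\<sigma> 0 = f q0"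
    and \<sigma>: "\<forall>i. \<exists>q\<in>S. \<exists>q'\<in>S. \<sigma> i = f q \<and> \<sigma> (Suc i) = f q' \<and> \<delta> q (w i) q'"
    and \<sigma>F: "\<exists>\<^sub>\<infinity>i. \<exists>q\<in>S. \<sigma> i = f q \<and> F q"
    unfolding nba_accepts_def by blast
  define \<rho> where "\<rho> i = inv_into S f (\<sigma> i)" for i
  have \<rho>: "q \<in> S \<Longrightarrow> \<sigma> i = f q \<Longrightarrow> \<rho> i = q" for q i
    unfolding \<rho>_def using inj by simp
  have "\<rho> 0 = q0"
    using \<rho> \<sigma>0 \<open>q0 \<in> S\<close> by blast
  moreover have "\<delta> (\<rho> i) (w i) (\<rho> (Suc i))" for i
    using \<sigma> \<rho> by metis
  moreover have "\<exists>\<^sub>\<infinity>i. F (\<rho> i)"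
    using \<sigma>F by (rule INFM_mono) (use \<rho> in blast)
  ultimately show "nba_accepts \<delta> q0 F w"
    unfolding nba_accepts_def by blast
next
  assume "nba_accepts \<delta> q0 F w"
  then obtain \<rho> where \<rho>0: "\<rho> 0 = q0" and \<rho>: "\<forall>i. \<delta> (\<rho> i) (w i) (\<rho> (Suc i))"
    and \<rho>F: "\<exists>\<^sub>\<infinity>i. F (\<rho> i)"
    unfolding nba_accepts_def by blast
  have \<rho>S: "\<rho> i \<in> S" for i
    by (induction i) (use \<rho>0 \<open>q0 \<in> S\<close> closed \<rho> in auto)
  show "nba_accepts (\<lambda>p a p'. \<exists>q\<in>S. \<exists>q'\<in>S. p = f q \<and> p' = f q' \<and> \<delta> q a q') (f q0)
      (\<lambda>p. \<exists>q\<in>S. p = f q \<and> F q) w"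
    unfolding nba_accepts_def
  proof (intro exI conjI allI)
    show "(f \<circ> \<rho>) 0 = f q0"
      using \<rho>0 by simp
    show "\<exists>q\<in>S. \<exists>q'\<in>S. (f \<circ> \<rho>) i = f q \<and> (f \<circ> \<rho>) (Suc i) = f q' \<and> \<delta> q (w i) q'" for i
      using \<rho>S \<rho> by auto
    show "\<exists>\<^sub>\<infinity>i. \<exists>q\<in>S. (f \<circ> \<rho>) i = f q \<and> F q"
      using \<rho>F by (rule INFM_mono) (use \<rho>S in auto)
  qed
qed

text \<open>Transitions are labelled by a formula \<open>\<chi> X\<close> defining the set \<open>X\<close> of predicates from \<open>P\<close>
  that a letter satisfies; \<open>X\<close> is the letter read by the abstract automaton \<open>\<delta>\<close>.\<close>

definition labelled_buechi ::
    "('f set \<Rightarrow> 'f) \<Rightarrow> 'f set \<Rightarrow> nat set \<Rightarrow> (nat \<Rightarrow> 'f set \<Rightarrow> nat \<Rightarrow> bool) \<Rightarrow> nat \<Rightarrow> (nat \<Rightarrow> bool) \<Rightarrow>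
      'f buechi" where
  "labelled_buechi \<chi> P Q \<delta> q0 F = \<lparr>states = Q, init = q0,
     trans = {(q, \<chi> X, q') | q X q'. q \<in> Q \<and> X \<subseteq> P \<and> \<delta> q X q'}, final = {q \<in> Q. F q}\<rparr>"

lemma wf_labelled_buechi:
  assumes "\<And>X. X \<subseteq> P \<Longrightarrow> \<chi> X \<in> Phi n" and "finite P"
    and "finite Q" "q0 \<in> Q" and closed: "\<And>q a q'. \<delta> q a q' \<Longrightarrow> q' \<in> Q"
  shows "wf_buechi Phi n (labelled_buechi \<chi> P Q \<delta> q0 F)"
proof -
  let ?T = "{(q, \<chi> X, q') | q X q'. q \<in> Q \<and> X \<subseteq> P \<and> \<delta> q X q'}"
  have "?T \<subseteq> (\<lambda>(q, X, q'). (q, \<chi> X, q')) ` (Q \<times> Pow P \<times> Q)"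
  proof
    fix t
    assume "t \<in> ?T"
    then obtain q X q' where "t = (q, \<chi> X, q')" "q \<in> Q" "X \<subseteq> P" "\<delta> q X q'"
      by blast
    then show "t \<in> (\<lambda>(q, X, q'). (q, \<chi> X, q')) ` (Q \<times> Pow P \<times> Q)"
      using closed by (intro image_eqI[of _ _ "(q, X, q')"]) auto
  qed
  then have "finite ?T"
    using assms(2,3) by (meson finite_Pow_iff finite_SigmaI finite_imageI finite_subset)
  moreover have "?T \<subseteq> Q \<times> Phi n \<times> Q"
    using assms(1) closed by fastforce
  ultimately show ?thesis
    unfolding wf_buechi_def labelled_buechi_def using assms(3,4) by simp
qed

lemma buechi_lang_labelled_buechi:
  assumes label: "\<And>X ms. X \<subseteq> P \<Longrightarrow> ms \<in> tuples n \<Longrightarrow> sat (\<chi> X) ms \<longleftrightarrow> true_preds P sat ms = X"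
    and "q0 \<in> Q" and closed: "\<And>q a q'. \<delta> q a q' \<Longrightarrow> q' \<in> Q"
  shows "buechi_lang sat n (labelled_buechi \<chi> P Q \<delta> q0 F) =
    {\<alpha> \<in> words n. nba_accepts \<delta> q0 F (\<lambda>i. true_preds P sat (\<alpha> i))}"
proof -
  let ?B = "labelled_buechi \<chi> P Q \<delta> q0 F"
  have "(\<exists>\<rho>. is_run sat ?B \<alpha> \<rho> \<and> (\<exists>\<^sub>\<infinity>i. \<rho> i \<in> final ?B)) \<longleftrightarrow>
      nba_accepts \<delta> q0 F (\<lambda>i. true_preds P sat (\<alpha> i))"
    if "\<alpha> \<in> words n" for \<alpha>
  proof -
    have "\<alpha> i \<in> tuples n" for i
      using that unfolding words_def tuples_def by simp
    then have label_\<alpha>: "X \<subseteq> P \<Longrightarrow> sat (\<chi> X) (\<alpha> i) \<longleftrightarrow> true_preds P sat (\<alpha> i) = X" for X i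
      using label by blast
    have step: "(\<exists>\<phi>. (q, \<phi>, q') \<in> trans ?B \<and> sat \<phi> (\<alpha> i)) \<longleftrightarrow>
        q \<in> Q \<and> \<delta> q (true_preds P sat (\<alpha> i)) q'" for q q' i
    proof
      assume "\<exists>\<phi>. (q, \<phi>, q') \<in> trans ?B \<and> sat \<phi> (\<alpha> i)"
      then obtain X where "q \<in> Q" "X \<subseteq> P" "\<delta> q X q'" "sat (\<chi> X) (\<alpha> i)"
        unfolding labelled_buechi_def by auto
      then show "q \<in> Q \<and> \<delta> q (true_preds P sat (\<alpha> i)) q'"
        using label_\<alpha> by simp
    next
      let ?X = "true_preds P sat (\<alpha> i)"
      assume "q \<in> Q \<and> \<delta> q ?X q'"
      moreover have "?X \<subseteq> P"
        unfolding true_preds_def by blast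
      ultimately have "(q, \<chi> ?X, q') \<in> trans ?B"
        unfolding labelled_buechi_def by auto
      moreover have "sat (\<chi> ?X) (\<alpha> i)"
        using label_\<alpha> \<open>?X \<subseteq> P\<close> by simp
      ultimately show "\<exists>\<phi>. (q, \<phi>, q') \<in> trans ?B \<and> sat \<phi> (\<alpha> i)"
        by blast
    qed
    have "\<rho> i \<in> Q" if "\<rho> 0 = q0" "\<forall>i. \<delta> (\<rho> i) (v i) (\<rho> (Suc i))" for \<rho> v i
      using that \<open>q0 \<in> Q\<close> closed by (cases i) auto
    then show ?thesis
      unfolding nba_accepts_def is_run_def step
      by (auto simp: labelled_buechi_def elim!: INFM_mono)
  qed
  then show ?thesis
    unfolding buechi_lang_def by blast
qed

lemma buechi_of_nba:
  fixes \<delta> :: "'s \<Rightarrow> 'f set \<Rightarrow> 's \<Rightarrow> bool"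
  assumes lc: "logic_closed Phi sat" and P: "finite P" "P \<subseteq> Phi n"
    and S: "finite S" "q0 \<in> S" and closed: "\<And>q a q'. q \<in> S \<Longrightarrow> \<delta> q a q' \<Longrightarrow> q' \<in> S"
  shows "\<exists>B. wf_buechi Phi n B \<and>
    buechi_lang sat n B = {\<alpha> \<in> words n. nba_accepts \<delta> q0 F (\<lambda>i. true_preds P sat (\<alpha> i))}"
proof -
  define \<chi> where "\<chi> X = (SOME \<chi>. \<chi> \<in> Phi n \<and> (\<forall>ms\<in>tuples n. sat \<chi> ms \<longleftrightarrow> true_preds P sat ms = X))"
    for X
  have \<chi>: "\<chi> X \<in> Phi n \<and> (\<forall>ms\<in>tuples n. sat (\<chi> X) ms \<longleftrightarrow> true_preds P sat ms = X)" if "X \<subseteq> P" for X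
    unfolding \<chi>_def using exists_valuation_formula[OF lc P that] by (rule someI_ex[OF bexE]) blast
  obtain f :: "'s \<Rightarrow> nat" where f: "inj_on f S"
    using finite_imp_inj_to_nat_seg[OF S(1)] by blast
  let ?\<delta> = "\<lambda>p a p'. \<exists>q\<in>S. \<exists>q'\<in>S. p = f q \<and> p' = f q' \<and> \<delta> q a q'"
  let ?F = "\<lambda>p. \<exists>q\<in>S. p = f q \<and> F q"
  let ?B = "labelled_buechi \<chi> P (f ` S) ?\<delta> (f q0) ?F"
  have wf: "wf_buechi Phi n ?B"
    using \<chi> P(1) S by (intro wf_labelled_buechi) auto
  have "buechi_lang sat n ?B =
      {\<alpha> \<in> words n. nba_accepts ?\<delta> (f q0) ?F (\<lambda>i. true_preds P sat (\<alpha> i))}"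
    using \<chi> S(2) by (intro buechi_lang_labelled_buechi) auto
  also have "\<dots> = {\<alpha> \<in> words n. nba_accepts \<delta> q0 F (\<lambda>i. true_preds P sat (\<alpha> i))}"
    by (simp only: nba_accepts_rename[OF f S(2) closed])
  finally show ?thesis
    using wf by blast
qed

theorem mainTheorem9:
  fixes Phi :: "nat \<Rightarrow> 'f set" and sat :: "'f \<Rightarrow> 'm list \<Rightarrow> bool"
    and n :: nat and \<psi> :: "'f mso"
  assumes "logic_closed Phi sat"
    and "mso_sentence \<psi>"
    and "preds \<psi> \<subseteq> Phi n"
  shows "\<exists>B. wf_buechi Phi n B \<and> mso_lang sat n \<psi> = buechi_lang sat n B"
proof -
  let ?P = "preds \<psi>"
  have "recognizable (enc_lang ?P {} {} \<psi>)"
    using assms(2) by (intro recognizable_enc_lang) (simp_all add: mso_sentence_def)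
  then have "recognizable {v. image Holds \<circ> v \<in> enc_lang ?P {} {} \<psi>}"
    by (rule recognizable_vimage_letters)
  then obtain \<delta> :: "'f set list set factor_state \<Rightarrow> 'f set \<Rightarrow> 'f set list set factor_state \<Rightarrow> bool"
      and q0 F S where S: "finite S" "q0 \<in> S" "\<And>q a q'. q \<in> S \<Longrightarrow> \<delta> q a q' \<Longrightarrow> q' \<in> S"
      and accepts: "\<And>v. nba_accepts \<delta> q0 F v \<longleftrightarrow> v \<in> {v. image Holds \<circ> v \<in> enc_lang ?P {} {} \<psi>}"
    by (rule recognizable_imp_nba) blast
  have "finite ?P"
    by (induction \<psi>) auto
  then have "\<exists>B. wf_buechi Phi n B \<and>
      buechi_lang sat n B = {\<alpha> \<in> words n. nba_accepts \<delta> q0 F (\<lambda>i. true_preds ?P sat (\<alpha> i))}"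
    by (rule buechi_of_nba[OF assms(1) _ assms(3) S])
  then obtain B where "wf_buechi Phi n B"
    and "buechi_lang sat n B = {\<alpha> \<in> words n. nba_accepts \<delta> q0 F (\<lambda>i. true_preds ?P sat (\<alpha> i))}"
    by blast
  moreover have "mso_lang sat n \<psi> = {\<alpha> \<in> words n. nba_accepts \<delta> q0 F (\<lambda>i. true_preds ?P sat (\<alpha> i))}"
    unfolding mso_lang_eq_enc_lang[OF assms(2)] accepts by (simp add: comp_def)
  ultimately have "wf_buechi Phi n B \<and> mso_lang sat n \<psi> = buechi_lang sat n B"
    by simp
  then show ?thesis ..
qed

end
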